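(* For every positive integer $n$, $$\sum_{j=1}^{n}\csc^8\left(\frac{\pi j}{2n+1}\right) = \frac{128(n+1)n(n^2+n+3)(3n^4+6n^3+7n^2+4n+15)}{14175}.$$ *)

theory Defs
  imports Complex_Main
begin

end

theory Submission
  imports Defs "HOL-Computational_Algebra.Polynomial"
begin

text \<open>
  With \<open>m = 2n + 1\<close>, the recurrence
  \<open>sin (a + 2t) = 2 (1 - 2 sin\<^sup>2 t) sin a - sin (a - 2t)\<close> shows
  \<open>sin (m t) = sin t \<cdot> U\<^sub>n (sin\<^sup>2 t)\<close> for a real polynomial \<open>U\<^sub>n\<close> (\<open>odd_sin_poly n\<close>)
  of degree \<open>n\<close>. Its roots are the \<open>n\<close> distinct numbers \<open>sin\<^sup>2 (\<pi> j / m)\<close>, \<open>1 \<le> j \<le> n\<close>,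
  and \<open>U\<^sub>n(0) = m\<close>, so \<open>U\<^sub>n(x) = m \<Prod>\<^sub>j (1 - x csc\<^sup>2 (\<pi> j / m))\<close>. The low coefficients
  of \<open>U\<^sub>n\<close> are explicit polynomials in \<open>m\<close>, and Newton's identities turn the first
  four of them into the fourth power sum \<open>\<Sum>\<^sub>j csc\<^sup>8 (\<pi> j / m)\<close>.
\<close>

fun odd_sin_poly :: "nat \<Rightarrow> real poly" where
  "odd_sin_poly 0 = [:1:]"
| "odd_sin_poly (Suc 0) = [:3, -4:]"
| "odd_sin_poly (Suc (Suc n)) = [:2, -4:] * odd_sin_poly (Suc n) - odd_sin_poly n"

lemma sin_odd_multiple_eq:
  "sin ((2 * real n + 1) * t) = sin t * poly (odd_sin_poly n) (sin t ^ 2)"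
proof -
  have step: "sin (a + 2 * t) = 2 * (1 - 2 * sin t ^ 2) * sin a - sin (a - 2 * t)" for a
    by (simp add: sin_add sin_diff cos_double_sin)
  show ?thesis
  proof (induction n rule: odd_sin_poly.induct)
    case 2
    show ?case using step[of t] by (simp add: algebra_simps)
  next
    case (3 n)
    show ?case
      using step[of "(2 * real (Suc n) + 1) * t"] 3 by (simp add: algebra_simps)
  qed simp
qed

lemma coeff_odd_sin_poly_above: "n < k \<Longrightarrow> coeff (odd_sin_poly n) k = 0"
proof (induction n arbitrary: k rule: odd_sin_poly.induct)
  case (3 n)
  then show ?case by (cases k) (simp_all add: coeff_pCons)
qed (auto simp: coeff_pCons split: nat.split)

lemma coeff_odd_sin_poly_self: "coeff (odd_sin_poly n) n = (-4) ^ n"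
  by (induction n rule: odd_sin_poly.induct) (simp_all add: coeff_pCons coeff_odd_sin_poly_above)

lemma degree_odd_sin_poly: "degree (odd_sin_poly n) = n"
  by (rule antisym, rule degree_le)
    (simp_all add: le_degree coeff_odd_sin_poly_above coeff_odd_sin_poly_self)

lemma coeff_odd_sin_poly_0: "m = 2 * real n + 1 \<Longrightarrow> coeff (odd_sin_poly n) 0 = m"
  by (induction n arbitrary: m rule: odd_sin_poly.induct) simp_all

lemma coeff_odd_sin_poly_1:
  "m = 2 * real n + 1 \<Longrightarrow> coeff (odd_sin_poly n) 1 = - m * (m^2 - 1) / 6"
proof (induction n arbitrary: m rule: odd_sin_poly.induct)
  case (3 n)
  then show ?case
    by (simp add: coeff_pCons coeff_odd_sin_poly_0 field_simps) algebra
qed simp_all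

lemma coeff_odd_sin_poly_2:
  "m = 2 * real n + 1 \<Longrightarrow> coeff (odd_sin_poly n) 2 = m * (m^2 - 1) * (m^2 - 9) / 120"
proof (induction n arbitrary: m rule: odd_sin_poly.induct)
  case (3 n)
  then show ?case
    by (simp add: coeff_pCons coeff_odd_sin_poly_1[OF refl, unfolded One_nat_def] field_simps) algebra
qed (simp_all add: numeral_2_eq_2)

lemma coeff_odd_sin_poly_3:
  "m = 2 * real n + 1 \<Longrightarrow>
     coeff (odd_sin_poly n) 3 = - m * (m^2 - 1) * (m^2 - 9) * (m^2 - 25) / 5040"
proof (induction n arbitrary: m rule: odd_sin_poly.induct)
  case (3 n)
  then show ?case
    by (simp add: coeff_pCons coeff_odd_sin_poly_2[OF refl] field_simps) algebra
qed (simp_all add: numeral_3_eq_3)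

lemma coeff_odd_sin_poly_4:
  "m = 2 * real n + 1 \<Longrightarrow>
     coeff (odd_sin_poly n) 4 = m * (m^2 - 1) * (m^2 - 9) * (m^2 - 25) * (m^2 - 49) / 362880"
proof (induction n arbitrary: m rule: odd_sin_poly.induct)
  case (3 n)
  then show ?case
    by (simp add: coeff_pCons coeff_odd_sin_poly_3[OF refl] field_simps) algebra
qed (simp_all add: eval_nat_numeral)

lemma prod_reciprocal_roots_dvd:
  fixes p :: "'a::field poly" and s r :: "'b \<Rightarrow> 'a"
  assumes "finite A" "inj_on s A" "\<And>j. j \<in> A \<Longrightarrow> poly p (s j) = 0"
    and "\<And>j. j \<in> A \<Longrightarrow> r j * s j = 1"
  shows "(\<Prod>j\<in>A. [:1, - r j:]) dvd p"
  using assms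
proof (induction A arbitrary: p rule: finite_induct)
  case empty
  then show ?case by simp
next
  case (insert a A)
  have "[:- s a, 1:] dvd p"
    using insert.prems by (simp flip: poly_eq_0_iff_dvd)
  moreover have ra: "r a \<noteq> 0"
    using insert.prems(3)[of a] by auto
  ultimately have "smult (- r a) [:- s a, 1:] dvd p"
    by (intro smult_dvd) simp_all
  moreover have "smult (- r a) [:- s a, 1:] = [:1, - r a:]"
    using insert.prems(3)[of a] by simp
  ultimately have "[:1, - r a:] dvd p"
    by simp
  then obtain q where q: "p = [:1, - r a:] * q" ..
  have "poly q (s j) = 0" if j: "j \<in> A" for j
  proof -
    have "s j \<noteq> s a"
      using insert.prems(1) insert.hyps(2) j by (auto simp: inj_on_def)
    then have "r a * s j \<noteq> r a * s a"
      using ra by simp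
    then have "1 - r a * s j \<noteq> 0"
      using insert.prems(3)[of a] by simp
    then show ?thesis
      using insert.prems(2)[of j] j q by (simp add: mult.commute)
  qed
  then have "(\<Prod>j\<in>A. [:1, - r j:]) dvd q"
    using insert.IH[of q] insert.prems by (auto simp: inj_on_insert)
  then have "[:1, - r a:] * (\<Prod>j\<in>A. [:1, - r j:]) dvd [:1, - r a:] * q"
    by (rule mult_dvd_mono[OF dvd_refl])
  then show ?case
    using q insert.hyps by simp
qed

lemma linear_mult_geometric_poly:
  fixes x :: "'a::idom"
  shows "[:1, - x:] * (\<Sum>k<K. monom (x ^ (k + 1)) k) = [:x:] - monom (x ^ (K + 1)) K"
proof (induction K)
  case 0
  then show ?case by (simp add: monom_0)
next
  case (Suc K)
  have "[:1, - x:] * monom (x ^ (K + 1)) K = monom (x ^ (K + 1)) K - monom (x ^ (K + 2)) (Suc K)"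
    by (simp add: poly_eq_iff coeff_monom coeff_pCons split: nat.split)
  with Suc show ?case
    by (simp add: distrib_left)
qed

lemma prod_linear_mult_power_sums:
  fixes r :: "'b \<Rightarrow> 'a::idom"
  assumes "finite A"
  shows "(\<Prod>j\<in>A. [:1, - r j:]) * (\<Sum>k<K. monom (\<Sum>j\<in>A. r j ^ (k + 1)) k)
     = - pderiv (\<Prod>j\<in>A. [:1, - r j:])
       - (\<Sum>j\<in>A. (\<Prod>i\<in>A - {j}. [:1, - r i:]) * monom (r j ^ (K + 1)) K)"
proof -
  define F where "F = (\<Prod>j\<in>A. [:1, - r j:])"
  define G where "G j = (\<Prod>i\<in>A - {j}. [:1, - r i:])" for j
  have "F * (\<Sum>k<K. monom (r j ^ (k + 1)) k) = G j * [:r j:] - G j * monom (r j ^ (K + 1)) K"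
    if "j \<in> A" for j
  proof -
    have "F = [:1, - r j:] * G j"
      unfolding F_def G_def using assms that by (rule prod.remove)
    then have "F * (\<Sum>k<K. monom (r j ^ (k + 1)) k)
        = G j * ([:1, - r j:] * (\<Sum>k<K. monom (r j ^ (k + 1)) k))"
      by (simp only: mult_ac)
    then show ?thesis
      by (simp only: linear_mult_geometric_poly right_diff_distrib)
  qed
  then have "F * (\<Sum>k<K. monom (\<Sum>j\<in>A. r j ^ (k + 1)) k)
      = (\<Sum>j\<in>A. G j * [:r j:]) - (\<Sum>j\<in>A. G j * monom (r j ^ (K + 1)) K)"
    by (simp add: monom_sum sum.swap[of _ A] sum_distrib_left sum_subtractf)
  moreover have "pderiv F = - (\<Sum>j\<in>A. G j * [:r j:])"
    unfolding F_def G_def by (simp add: pderiv_prod pderiv_pCons sum_negf)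
  ultimately show ?thesis
    unfolding F_def G_def by simp
qed

lemma newton_identity:
  fixes r :: "'b \<Rightarrow> 'a::idom"
  assumes "finite A"
  defines "F \<equiv> \<Prod>j\<in>A. [:1, - r j:]"
  shows "(\<Sum>i\<le>k. coeff F i * (\<Sum>j\<in>A. r j ^ (k - i + 1))) = - of_nat (Suc k) * coeff F (Suc k)"
proof -
  define S where "S = (\<Sum>l<Suc k. monom (\<Sum>j\<in>A. r j ^ (l + 1)) l)"
  define R where "R = (\<Sum>j\<in>A. (\<Prod>i\<in>A - {j}. [:1, - r i:]) * monom (r j ^ (Suc k + 1)) (Suc k))"
  have "F * S = - pderiv F - R"
    unfolding F_def S_def R_def using assms(1) by (rule prod_linear_mult_power_sums)
  then have "coeff (F * S) k = - coeff (pderiv F) k - coeff R k"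
    by simp
  moreover have "coeff (F * S) k = (\<Sum>i\<le>k. coeff F i * (\<Sum>j\<in>A. r j ^ (k - i + 1)))"
    unfolding coeff_mult S_def by (intro sum.cong) (auto simp: coeff_sum coeff_monom)
  moreover have "coeff R k = 0"
    by (simp add: R_def coeff_sum mult.commute[of _ "monom _ _"] coeff_monom_mult)
  ultimately show ?thesis
    by (simp add: coeff_pderiv algebra_simps)
qed

lemma fourth_power_sum_eq_coeffs:
  fixes r :: "'b \<Rightarrow> 'a::idom"
  assumes "finite A"
  defines "F \<equiv> \<Prod>j\<in>A. [:1, - r j:]"
  shows "(\<Sum>j\<in>A. r j ^ 4) = coeff F 1 ^ 4 - 4 * coeff F 1 ^ 2 * coeff F 2 + 2 * coeff F 2 ^ 2
           + 4 * coeff F 1 * coeff F 3 - 4 * coeff F 4"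
proof -
  define p where "p i = (\<Sum>j\<in>A. r j ^ i)" for i
  define a where "a i = coeff F i" for i
  have a0: "a 0 = 1"
    by (simp add: a_def F_def poly_prod flip: poly_0_coeff_0)
  have "(\<Sum>i\<le>k. a i * p (k - i + 1)) = - of_nat (Suc k) * a (Suc k)" for k
    unfolding a_def p_def F_def using assms(1) by (rule newton_identity)
  from this[of 0] this[of 1] this[of 2] this[of 3]
  have "p 1 = - a 1" "p 2 = - a 1 * p 1 - 2 * a 2" "p 3 = - a 1 * p 2 - a 2 * p 1 - 3 * a 3"
    "p 4 = - a 1 * p 3 - a 2 * p 2 - a 3 * p 1 - 4 * a 4"
    by (simp_all add: a0 eval_nat_numeral algebra_simps)
  then show ?thesis
    unfolding p_def[symmetric] a_def[symmetric]
    by (simp only:) (simp add: algebra_simps power2_eq_square power4_eq_xxxx)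
qed

lemma poly_odd_sin_poly_sin_sq_eq_0:
  assumes "sin t \<noteq> 0" and "sin ((2 * real n + 1) * t) = 0"
  shows "poly (odd_sin_poly n) (sin t ^ 2) = 0"
  using assms by (simp add: sin_odd_multiple_eq)

lemma strict_mono_on_sin_sq: "strict_mono_on {0..pi/2} (\<lambda>x. sin x ^ 2)"
proof (rule strict_mono_onI)
  fix x y :: real
  assume "x \<in> {0..pi/2}" "y \<in> {0..pi/2}" "x < y"
  then show "sin x ^ 2 < sin y ^ 2"
    by (intro power_strict_mono sin_monotone_2pi) (auto intro: sin_ge_zero)
qed

lemma odd_sin_poly_eq_prod:
  "odd_sin_poly n
     = smult (2 * real n + 1) (\<Prod>j\<in>{1..n}. [:1, - (1 / sin (pi * real j / real (2 * n + 1)) ^ 2):])"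
proof -
  define \<theta> where "\<theta> j = pi * real j / real (2 * n + 1)" for j
  define F where "F = (\<Prod>j\<in>{1..n}. [:1, - (1 / sin (\<theta> j) ^ 2):])"
  have \<theta>_range: "0 < \<theta> j" "\<theta> j < pi / 2" if "j \<in> {1..n}" for j
  proof -
    have "pi * (2 * real j) < pi * (2 * real n + 1)"
      using that by simp
    then show "0 < \<theta> j" "\<theta> j < pi / 2"
      using that by (auto simp: \<theta>_def field_simps)
  qed
  have sin_pos: "sin (\<theta> j) > 0" if "j \<in> {1..n}" for j
    using \<theta>_range[OF that] by (intro sin_gt_zero) auto
  have "strict_mono_on {1..n} \<theta>"
    by (rule strict_mono_onI) (simp add: \<theta>_def divide_strict_right_mono)
  then have "strict_mono_on {1..n} (\<lambda>j. sin (\<theta> j) ^ 2)"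
    using strict_mono_on_sin_sq \<theta>_range
    by (auto simp: strict_mono_on_def less_imp_le)
  then have inj: "inj_on (\<lambda>j. sin (\<theta> j) ^ 2) {1..n}"
    by (rule strict_mono_on_imp_inj_on)
  have "(2 * real n + 1) * \<theta> j = real j * pi" for j
    by (simp add: \<theta>_def field_simps)
  then have roots: "poly (odd_sin_poly n) (sin (\<theta> j) ^ 2) = 0" if "j \<in> {1..n}" for j
    using sin_pos[OF that] by (intro poly_odd_sin_poly_sin_sq_eq_0) (auto simp: sin_npi)
  have "F dvd odd_sin_poly n"
    unfolding F_def using inj roots sin_pos[THEN less_imp_neq, THEN not_sym]
    by (intro prod_reciprocal_roots_dvd[where s = "\<lambda>j. sin (\<theta> j) ^ 2"
          and r = "\<lambda>j. 1 / sin (\<theta> j) ^ 2"]) (auto simp: field_simps)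
  then obtain q where q: "odd_sin_poly n = F * q" ..
  have "degree F = (\<Sum>j\<in>{1..n}. degree [:1, - (1 / sin (\<theta> j) ^ 2):])"
    unfolding F_def by (rule degree_prod_sum_eq) simp
  also have "\<dots> = n"
    using sin_pos by (simp add: less_imp_neq[THEN not_sym])
  finally have "degree F = n" .
  moreover have "odd_sin_poly n \<noteq> 0"
    using coeff_odd_sin_poly_self[of n] by auto
  ultimately have "degree q = 0"
    using q degree_odd_sin_poly[of n] by (auto simp: degree_mult_eq)
  then have "q = [:coeff q 0:]"
    by (simp add: degree_0_id)
  moreover have "coeff F 0 = 1"
    by (simp add: F_def poly_prod flip: poly_0_coeff_0)
  moreover have "coeff (odd_sin_poly n) 0 = coeff F 0 * coeff q 0"
    using q by (simp add: coeff_mult_0)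
  ultimately have "coeff q 0 = 2 * real n + 1"
    using coeff_odd_sin_poly_0[OF refl, of n] by simp
  then show ?thesis
    using q \<open>q = [:coeff q 0:]\<close> by (simp add: F_def \<theta>_def)
qed

lemma coeff_prod_csc_sq:
  fixes n :: nat
  defines "m \<equiv> 2 * real n + 1"
    and "F \<equiv> \<Prod>j\<in>{1..n}. [:1, - (1 / sin (pi * real j / real (2 * n + 1)) ^ 2):]"
  shows "coeff F 1 = - (m^2 - 1) / 6"
    and "coeff F 2 = (m^2 - 1) * (m^2 - 9) / 120"
    and "coeff F 3 = - (m^2 - 1) * (m^2 - 9) * (m^2 - 25) / 5040"
    and "coeff F 4 = (m^2 - 1) * (m^2 - 9) * (m^2 - 25) * (m^2 - 49) / 362880"
proof -
  have m: "m = 2 * real n + 1" and "m \<noteq> 0"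
    by (simp_all add: m_def add_pos_nonneg)
  moreover have "odd_sin_poly n = smult m F"
    unfolding m_def F_def by (rule odd_sin_poly_eq_prod)
  ultimately have coeff_F: "coeff F k = coeff (odd_sin_poly n) k / m" for k
    by simp
  show "coeff F 1 = - (m^2 - 1) / 6"
    using \<open>m \<noteq> 0\<close> unfolding coeff_F coeff_odd_sin_poly_1[OF m] by (simp add: field_simps)
  show "coeff F 2 = (m^2 - 1) * (m^2 - 9) / 120"
    using \<open>m \<noteq> 0\<close> unfolding coeff_F coeff_odd_sin_poly_2[OF m] by (simp add: field_simps)
  show "coeff F 3 = - (m^2 - 1) * (m^2 - 9) * (m^2 - 25) / 5040"
    using \<open>m \<noteq> 0\<close> unfolding coeff_F coeff_odd_sin_poly_3[OF m] by (simp add: field_simps)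
  show "coeff F 4 = (m^2 - 1) * (m^2 - 9) * (m^2 - 25) * (m^2 - 49) / 362880"
    using \<open>m \<noteq> 0\<close> unfolding coeff_F coeff_odd_sin_poly_4[OF m] by (simp add: field_simps)
qed

theorem mainTheorem14:
  fixes n :: nat
  assumes "n \<ge> 1"
  shows "(\<Sum>j=1..n. 1 / (sin (pi * real j / real (2*n+1))) ^ 8)
    = 128 * (real n + 1) * real n * ((real n)^2 + real n + 3)
      * (3 * (real n)^4 + 6 * (real n)^3 + 7 * (real n)^2 + 4 * real n + 15) / 14175"
proof -
  define r where "r j = 1 / sin (pi * real j / real (2 * n + 1)) ^ 2" for j
  define F where "F = (\<Prod>j\<in>{1..n}. [:1, - r j:])"
  have "(\<Sum>j=1..n. 1 / (sin (pi * real j / real (2*n+1))) ^ 8) = (\<Sum>j\<in>{1..n}. r j ^ 4)"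
    by (simp add: r_def power_divide flip: power_mult)
  also have "\<dots> = coeff F 1 ^ 4 - 4 * coeff F 1 ^ 2 * coeff F 2 + 2 * coeff F 2 ^ 2
                   + 4 * coeff F 1 * coeff F 3 - 4 * coeff F 4"
    unfolding F_def by (rule fourth_power_sum_eq_coeffs) simp
  also have "\<dots> = 128 * (real n + 1) * real n * ((real n)^2 + real n + 3)
      * (3 * (real n)^4 + 6 * (real n)^3 + 7 * (real n)^2 + 4 * real n + 15) / 14175"
    unfolding F_def r_def coeff_prod_csc_sq by (simp add: field_simps) algebra
  finally show ?thesis .
qed

end
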